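(* Fix integers $T\ge 3$, $\Delta t\ge 1$ and probabilities $p_0,q_0\in(0,1)$, and consider observations $y^1,\dots,y^T$ generated by the relaxed change model described in the context. For $3\le t\le T$, $0\le r\le t-3$ and $0\le r'\le\min\{\Delta t-1,\,t-r-3\}$ define $$\mathbb{G}^t_a(r',r)=\Pr\big(\bm{y}^{1:t},\ r^t=r,\ a^{t-r}=1,\ c^{t-r-1-r'}=1,\ c^s=0 \text{ for all } t-r-1-r'<s<t-r\big),$$ i.e. the most recent change is at time $t-r$ and ends a collective anomaly whose start (the preceding change) is at time $(t-r-1)-r'$. Then $\mathbb{G}^3_a(0,0)=\mathbb{L}(y^1)\mathbb{L}(y^2)\mathbb{L}(y^3)\,p_0q_0$, and for every $3<t\le T$: $$\mathbb{G}^t_a(r',r)=\begin{cases}\mathbb{G}^{t-1}_a(r',r-1)\,\mathbb{P}(y^t\mid\bm{y}^{(t-r):(t-1)})\,(1-p_0), & r>0,\\ \mathbb{H}^{t-1}_c(r')\,\mathbb{L}(y^t)\,q_0, & r=0,\end{cases}$$ where $\mathbb{H}^{t-1}_c(r')=\Pr(\bm{y}^{1:(t-1)},\,r^{t-1}=r',\,a^{t-1-r'}=0)$.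
   Context: Relaxed change model: binary variables $c^t,a^t$ ($t=1,\dots,T$) with $c^1=1$, $a^1=0$. For $t>1$, call $t$ "open" if there is $t'\in\{t-\Delta t,\dots,t-1\}\setminus\{1\}$, $t'\ge 1$, with $c^{t'}=1$, $a^{t'}=0$ and $c^s=0$ for all $t'<s\le t-1$. Given the past, $c^t=1$ with probability $q_0$ if $t$ is open and $p_0$ otherwise; $a^t=1$ if $c^t=1$ and $t$ is open, and $a^t=0$ otherwise. Given a parametric density family $\Pr(y\mid\theta)$ and a prior $\Pr(\theta\mid\pi_0)$: $\theta^1$ is drawn from the prior; for $t>1$, $\theta^t=\theta^{t-1}$ if $c^t=0$, and $\theta^t$ is drawn independently from the prior if $c^t=1$; given $\theta^t$, $y^t\sim\Pr(\cdot\mid\theta^t)$ independently. $\Pr(\bm{y}^{1:t},E)$ denotes the joint density of $y^1,\dots,y^t$ together with the event $E$. Marginal likelihoods: for $1\le a\le b$, $\mathbb{L}(\bm{y}^{a:b})=\int\prod_{s=a}^b\Pr(y^s\mid\theta)\Pr(\theta\mid\pi_0)\,d\theta$ (with $\mathbb{L}(y^b)=\mathbb{L}(\bm{y}^{b:b})$), and for $a<b$, $\mathbb{P}(y^b\mid\bm{y}^{a:(b-1)})=\mathbb{L}(\bm{y}^{a:b})/\mathbb{L}(\bm{y}^{a:(b-1)})$. Run length: $r^t=t-\max\{s\le t: c^s=1\}$. *)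

theory Defs
  imports "HOL-Probability.Probability"
begin

text \<open>A change configuration is a predicate c :: nat => bool, where c s means c^s = 1.
  Times are 1,2,...; only values at times 1..t matter for events up to time t.\<close>

definition cfg :: "nat set \<Rightarrow> nat \<Rightarrow> bool" where
  "cfg C s = (s = 1 \<or> s \<in> C)"

text \<open>Time s is open, given the change indicators c and the anomaly indicators A of earlier times.\<close>
definition is_open :: "nat \<Rightarrow> (nat \<Rightarrow> bool) \<Rightarrow> (nat \<Rightarrow> bool) \<Rightarrow> nat \<Rightarrow> bool" where
  "is_open dt c A s = (\<exists>t'. s - dt \<le> t' \<and> t' < s \<and> t' \<noteq> 1 \<and> 1 \<le> t' \<and> c t' \<and> \<not> A t'
                          \<and> (\<forall>u. t' < u \<and> u < s \<longrightarrow> \<not> c u))"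

text \<open>aseq dt c n gives the anomaly indicators a^1..a^n (False elsewhere).\<close>
primrec aseq :: "nat \<Rightarrow> (nat \<Rightarrow> bool) \<Rightarrow> nat \<Rightarrow> (nat \<Rightarrow> bool)" where
  "aseq dt c 0 = (\<lambda>_. False)"
| "aseq dt c (Suc n) = (let A = aseq dt c n in
      A(Suc n := (1 < Suc n \<and> c (Suc n) \<and> is_open dt c A (Suc n))))"

definition opn :: "nat \<Rightarrow> (nat \<Rightarrow> bool) \<Rightarrow> nat \<Rightarrow> bool" where
  "opn dt c s = (1 < s \<and> is_open dt c (aseq dt c (s - 1)) s)"

definition anom :: "nat \<Rightarrow> (nat \<Rightarrow> bool) \<Rightarrow> nat \<Rightarrow> bool" where
  "anom dt c s = aseq dt c s s"

definition cprob :: "nat \<Rightarrow> real \<Rightarrow> real \<Rightarrow> nat \<Rightarrow> (nat \<Rightarrow> bool) \<Rightarrow> real" where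
  "cprob dt p0 q0 t c = (\<Prod>s\<in>{2..t}.
      if opn dt c s then (if c s then q0 else 1 - q0) else (if c s then p0 else 1 - p0))"

definition lastchg :: "(nat \<Rightarrow> bool) \<Rightarrow> nat \<Rightarrow> nat" where
  "lastchg c s = (GREATEST u. u \<le> s \<and> c u)"

definition runlen :: "(nat \<Rightarrow> bool) \<Rightarrow> nat \<Rightarrow> nat" where
  "runlen c t = t - lastchg c t"

text \<open>Conditional density of y^1..y^t given c^1..c^t: the parameters drawn at the change
  times are i.i.d. from the prior Q, theta^s equals the parameter drawn at the last change
  time before s, and y^s has density lik (y s) (theta^s).\<close>
definition ydens :: "'th measure \<Rightarrow> ('y \<Rightarrow> 'th \<Rightarrow> real) \<Rightarrow> (nat \<Rightarrow> 'y) \<Rightarrow> nat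
    \<Rightarrow> (nat \<Rightarrow> bool) \<Rightarrow> real" where
  "ydens Q lik y t c = (\<integral>\<theta>. (\<Prod>s\<in>{1..t}. lik (y s) (\<theta> (lastchg c s)))
       \<partial>(PiM {u\<in>{1..t}. c u} (\<lambda>_. Q)))"

text \<open>Joint density Pr(y^{1:t}, E) for an event E on c^1..c^t.\<close>
definition joint :: "'th measure \<Rightarrow> ('y \<Rightarrow> 'th \<Rightarrow> real) \<Rightarrow> (nat \<Rightarrow> 'y) \<Rightarrow> nat \<Rightarrow> real \<Rightarrow> real
    \<Rightarrow> nat \<Rightarrow> ((nat \<Rightarrow> bool) \<Rightarrow> bool) \<Rightarrow> real" where
  "joint Q lik y dt p0 q0 t E =
     (\<Sum>C\<in>{C. C \<subseteq> {2..t} \<and> E (cfg C)}. cprob dt p0 q0 t (cfg C) * ydens Q lik y t (cfg C))"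

definition margL :: "'th measure \<Rightarrow> ('y \<Rightarrow> 'th \<Rightarrow> real) \<Rightarrow> (nat \<Rightarrow> 'y) \<Rightarrow> nat \<Rightarrow> nat \<Rightarrow> real" where
  "margL Q lik y a b = (\<integral>\<theta>. (\<Prod>s\<in>{a..b}. lik (y s) \<theta>) \<partial>Q)"

definition predP :: "'th measure \<Rightarrow> ('y \<Rightarrow> 'th \<Rightarrow> real) \<Rightarrow> (nat \<Rightarrow> 'y) \<Rightarrow> nat \<Rightarrow> nat \<Rightarrow> real" where
  "predP Q lik y a b = margL Q lik y a b / margL Q lik y a (b - 1)"

definition Ga :: "'th measure \<Rightarrow> ('y \<Rightarrow> 'th \<Rightarrow> real) \<Rightarrow> (nat \<Rightarrow> 'y) \<Rightarrow> nat \<Rightarrow> real \<Rightarrow> real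
    \<Rightarrow> nat \<Rightarrow> nat \<Rightarrow> nat \<Rightarrow> real" where
  "Ga Q lik y dt p0 q0 t r' r = joint Q lik y dt p0 q0 t (\<lambda>c.
      runlen c t = r \<and> anom dt c (t - r) \<and> c (t - r - 1 - r')
      \<and> (\<forall>s. t - r - 1 - r' < s \<and> s < t - r \<longrightarrow> \<not> c s))"

definition Hc :: "'th measure \<Rightarrow> ('y \<Rightarrow> 'th \<Rightarrow> real) \<Rightarrow> (nat \<Rightarrow> 'y) \<Rightarrow> nat \<Rightarrow> real \<Rightarrow> real
    \<Rightarrow> nat \<Rightarrow> nat \<Rightarrow> real" where
  "Hc Q lik y dt p0 q0 t r' = joint Q lik y dt p0 q0 t (\<lambda>c.
      runlen c t = r' \<and> \<not> anom dt c (t - r'))"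

end

theory Submission
  imports Defs
begin

(* Both recursions come from peeling off the last time step. The joint density is a sum over
   change sets C of the prior probability of C times the density of the observations given C;
   split the sets according to whether t is a change. The prior probability gains the factor
   for c^t, and whether t is open depends only on the change preceding t and whether that change
   was anomalous. The conditional density factorises into prior integrals over the blocks
   between consecutive changes, so it either gains the new block {t}, a factor L(y^t), or
   extends the last block, a factor P(y^t | y^{(t-r):(t-1)}).
   For r > 0 the last change t - r ended an anomaly, so t is not open and c^t = 0 costs 1 - p0.
   For r = 0 the change at t ends an anomaly started by a non-anomalous change at t - 1 - r'
   within the window, so t is open and c^t = 1 costs q0; what remains is H_c^{t-1}(r'). *)

lemma
  assumes "c 1" "1 \<le> s"
  shows lastchg_le: "lastchg c s \<le> s"
    and lastchg_ge_1: "1 \<le> lastchg c s"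
    and change_at_lastchg: "c (lastchg c s)"
    and no_change_after_lastchg: "\<And>w. lastchg c s < w \<Longrightarrow> w \<le> s \<Longrightarrow> \<not> c w"
proof -
  have ex: "1 \<le> s \<and> c 1" using assms by auto
  show "lastchg c s \<le> s" "c (lastchg c s)"
    unfolding lastchg_def using GreatestI_nat[of "\<lambda>u. u \<le> s \<and> c u" 1 s] ex by auto
  show "1 \<le> lastchg c s"
    unfolding lastchg_def using Greatest_le_nat[of "\<lambda>u. u \<le> s \<and> c u" 1 s] ex by auto
  fix w assume "lastchg c s < w" "w \<le> s"
  then show "\<not> c w"
    unfolding lastchg_def using Greatest_le_nat[of "\<lambda>u. u \<le> s \<and> c u" w s] by force
qed

lemma lastchg_eq_iff:
  assumes "c 1" "1 \<le> u" "u \<le> s"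
  shows "lastchg c s = u \<longleftrightarrow> c u \<and> (\<forall>w. u < w \<and> w \<le> s \<longrightarrow> \<not> c w)"
proof
  assume "lastchg c s = u"
  then show "c u \<and> (\<forall>w. u < w \<and> w \<le> s \<longrightarrow> \<not> c w)"
    using assms change_at_lastchg[of c s] no_change_after_lastchg[of c s] by auto
next
  assume u: "c u \<and> (\<forall>w. u < w \<and> w \<le> s \<longrightarrow> \<not> c w)"
  show "lastchg c s = u"
    unfolding lastchg_def
  proof (rule Greatest_equality)
    show "u \<le> s \<and> c u" using u assms by auto
    show "x \<le> u" if "x \<le> s \<and> c x" for x using u that by (meson not_le)
  qed
qed

lemma lastchg_cong:
  assumes "\<And>u. u \<le> s \<Longrightarrow> c u = c' u"
  shows "lastchg c s = lastchg c' s"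
  unfolding lastchg_def by (rule arg_cong[where f = Greatest]) (use assms in auto)

lemma lastchg_no_change:
  assumes "c 1" "2 \<le> t" "\<not> c t"
  shows "lastchg c t = lastchg c (t - 1)"
proof -
  have "1 \<le> lastchg c (t - 1)" "lastchg c (t - 1) \<le> t - 1"
    using assms lastchg_ge_1 lastchg_le by auto
  moreover have "\<forall>w. lastchg c (t - 1) < w \<and> w \<le> t \<longrightarrow> \<not> c w"
  proof (intro allI impI)
    fix w assume w: "lastchg c (t - 1) < w \<and> w \<le> t"
    then have "w = t \<or> w \<le> t - 1" by auto
    then show "\<not> c w"
      using assms w no_change_after_lastchg[of c "t - 1" w] by auto
  qed
  ultimately show ?thesis
    using assms change_at_lastchg[of c "t - 1"] by (subst lastchg_eq_iff) auto
qed

lemma runlen_eq_iff: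
  assumes "c 1" "r < s"
  shows "runlen c s = r \<longleftrightarrow> c (s - r) \<and> (\<forall>w. s - r < w \<and> w \<le> s \<longrightarrow> \<not> c w)"
proof -
  have "lastchg c s \<le> s" using assms lastchg_le by simp
  then have "runlen c s = r \<longleftrightarrow> lastchg c s = s - r" unfolding runlen_def using assms by auto
  also have "\<dots> \<longleftrightarrow> c (s - r) \<and> (\<forall>w. s - r < w \<and> w \<le> s \<longrightarrow> \<not> c w)"
    using assms by (intro lastchg_eq_iff) auto
  finally show ?thesis .
qed

lemma runlen_eq_0_iff:
  assumes "c 1" "1 \<le> t"
  shows "runlen c t = 0 \<longleftrightarrow> c t"
  using runlen_eq_iff[of c 0 t] assms by auto

lemma runlen_no_change:
  assumes "c 1" "2 \<le> t" "\<not> c t"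
  shows "runlen c t = Suc (runlen c (t - 1))"
proof -
  have "lastchg c (t - 1) \<le> t - 1" using assms by (intro lastchg_le) auto
  then have "lastchg c (t - 1) < t" using assms by linarith
  then show ?thesis using lastchg_no_change[OF assms] unfolding runlen_def by (simp add: Suc_diff_Suc)
qed

lemma aseq_cong:
  assumes "\<And>u. u \<le> n \<Longrightarrow> c u = c' u"
  shows "aseq dt c n = aseq dt c' n"
  using assms
proof (induction n)
  case 0
  then show ?case by simp
next
  case (Suc n)
  have IH: "aseq dt c n = aseq dt c' n" using Suc by auto
  have "is_open dt c (aseq dt c n) (Suc n) = is_open dt c' (aseq dt c n) (Suc n)"
    unfolding is_open_def using Suc.prems
    by (intro ex_cong1 conj_cong refl) (auto simp: less_Suc_eq_le)
  then show ?case using IH Suc.prems by (simp add: Let_def)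
qed

lemma aseq_eq_anom: "s \<le> n \<Longrightarrow> aseq dt c n s = anom dt c s"
  unfolding anom_def
proof (induction n)
  case 0
  then show ?case by simp
next
  case (Suc n)
  then show ?case by (cases "s = Suc n") (auto simp: Let_def)
qed

lemma anom_iff: "anom dt c t \<longleftrightarrow> c t \<and> opn dt c t"
  by (cases t) (auto simp: anom_def opn_def Let_def)

lemma opn_cong:
  assumes "\<And>u. u < s \<Longrightarrow> c u = c' u"
  shows "opn dt c s = opn dt c' s"
proof (cases "s = 0")
  case False
  then have "aseq dt c (s - 1) = aseq dt c' (s - 1)"
    using assms by (intro aseq_cong) auto
  then show ?thesis
    unfolding opn_def is_open_def using assms by (intro conj_cong refl ex_cong1) auto
qed (simp add: opn_def)

lemma opn_iff_lastchg:
  assumes "c 1" "2 \<le> t"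
  shows "opn dt c t \<longleftrightarrow>
    t - dt \<le> lastchg c (t - 1) \<and> lastchg c (t - 1) \<noteq> 1 \<and> \<not> anom dt c (lastchg c (t - 1))"
proof -
  define L where "L = lastchg c (t - 1)"
  have "1 \<le> t - 1" using assms by simp
  then have L: "c L" "1 \<le> L" "L < t" "\<And>u. L < u \<Longrightarrow> u < t \<Longrightarrow> \<not> c u"
    using assms lastchg_le[of c "t - 1"] lastchg_ge_1[of c "t - 1"] change_at_lastchg[of c "t - 1"]
      no_change_after_lastchg[of c "t - 1"] unfolding L_def by auto
  have unique: "t' = L" if "c t'" "t' < t" "\<forall>u. t' < u \<and> u < t \<longrightarrow> \<not> c u" for t'
    using that L by (metis linorder_neqE_nat)
  have anom: "aseq dt c (t - 1) L = anom dt c L"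
    using L by (intro aseq_eq_anom) auto
  show ?thesis
    unfolding L_def[symmetric]
  proof
    assume "opn dt c t"
    then obtain t' where t': "t - dt \<le> t'" "t' \<noteq> 1" "\<not> aseq dt c (t - 1) t'"
      and last: "c t'" "t' < t" "\<forall>u. t' < u \<and> u < t \<longrightarrow> \<not> c u"
      unfolding opn_def is_open_def by blast
    from last have "t' = L" by (rule unique)
    then show "t - dt \<le> L \<and> L \<noteq> 1 \<and> \<not> anom dt c L" using t' anom by simp
  next
    assume "t - dt \<le> L \<and> L \<noteq> 1 \<and> \<not> anom dt c L"
    then show "opn dt c t"
      unfolding opn_def is_open_def using L anom assms by (intro conjI exI[of _ L]) auto
  qed
qed

lemma opn_iff_runlen:
  assumes "c 1" "2 \<le> t" "runlen c (t - 1) = r" "r < t - 2" "r < dt"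
  shows "opn dt c t \<longleftrightarrow> \<not> anom dt c (t - 1 - r)"
proof -
  have "lastchg c (t - 1) \<le> t - 1" using assms by (intro lastchg_le) auto
  then have "lastchg c (t - 1) = t - 1 - r" using assms(3) unfolding runlen_def by arith
  then show ?thesis using opn_iff_lastchg[of c t dt] assms by auto
qed

lemma cprob_cong:
  assumes "\<And>u. u \<le> t \<Longrightarrow> c u = c' u"
  shows "cprob dt p0 q0 t c = cprob dt p0 q0 t c'"
  unfolding cprob_def
proof (rule prod.cong[OF refl])
  fix s assume "s \<in> {2..t}"
  moreover from this have "opn dt c s = opn dt c' s"
    using assms by (intro opn_cong) auto
  ultimately show "(if opn dt c s then if c s then q0 else 1 - q0 else if c s then p0 else 1 - p0) =
      (if opn dt c' s then if c' s then q0 else 1 - q0 else if c' s then p0 else 1 - p0)"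
    using assms by auto
qed

lemma cprob_last:
  assumes "2 \<le> t"
  shows "cprob dt p0 q0 t c = cprob dt p0 q0 (t - 1) c *
     (if opn dt c t then (if c t then q0 else 1 - q0) else (if c t then p0 else 1 - p0))"
proof -
  have "{2..t} = insert t {2..t - 1}" "t \<notin> {2..t - 1}" using assms by auto
  then show ?thesis unfolding cprob_def by (simp add: mult.commute)
qed

lemma ydens_cong:
  assumes "\<And>u. u \<le> t \<Longrightarrow> c u = c' u"
  shows "ydens Q lik y t c = ydens Q lik y t c'"
proof -
  have J: "{u\<in>{1..t}. c u} = {u\<in>{1..t}. c' u}" using assms by auto
  have "\<And>s. s \<in> {1..t} \<Longrightarrow> lastchg c s = lastchg c' s"
    using assms by (intro lastchg_cong) auto
  then have "(\<Prod>s\<in>{1..t}. lik (y s) (\<theta> (lastchg c s))) =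
      (\<Prod>s\<in>{1..t}. lik (y s) (\<theta> (lastchg c' s)))" for \<theta> :: "nat \<Rightarrow> 'a"
    by (intro prod.cong) auto
  then show ?thesis unfolding ydens_def J by simp
qed

lemma joint_split_last:
  assumes "2 \<le> t"
  shows "joint Q lik y dt p0 q0 t E =
      (\<Sum>C | C \<subseteq> {2..t - 1} \<and> E (cfg C). cprob dt p0 q0 t (cfg C) * ydens Q lik y t (cfg C)) +
      (\<Sum>C | C \<subseteq> {2..t - 1} \<and> E (cfg (insert t C)).
        cprob dt p0 q0 t (cfg (insert t C)) * ydens Q lik y t (cfg (insert t C)))"
proof -
  let ?A = "{C. C \<subseteq> {2..t - 1} \<and> E (cfg C)}"
  let ?B = "{C. C \<subseteq> {2..t - 1} \<and> E (cfg (insert t C))}"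
  have t: "{2..t} = insert t {2..t - 1}" "t \<notin> {2..t - 1}" using assms by auto
  have "{C. C \<subseteq> {2..t} \<and> E (cfg C)} = ?A \<union> insert t ` ?B"
  proof (intro set_eqI iffI)
    fix C assume C: "C \<in> {C. C \<subseteq> {2..t} \<and> E (cfg C)}"
    show "C \<in> ?A \<union> insert t ` ?B"
    proof (cases "t \<in> C")
      case True
      then have "C = insert t (C - {t})" by auto
      moreover have "C - {t} \<in> ?B" using C True t by (auto simp: insert_absorb)
      ultimately show ?thesis by blast
    qed (use C t in auto)
  qed (use t in auto)
  moreover have "finite ?A" "finite ?B"
    by (rule finite_subset[of _ "Pow {2..t - 1}"]; auto)+
  moreover have "?A \<inter> insert t ` ?B = {}" using t by auto
  moreover have "inj_on (insert t) ?B"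
    using t by (intro inj_onI) (metis (no_types, lifting) insert_ident mem_Collect_eq subsetD)
  ultimately show ?thesis
    unfolding joint_def by (simp add: sum.union_disjoint sum.reindex)
qed

definition block :: "(nat \<Rightarrow> bool) \<Rightarrow> nat \<Rightarrow> nat \<Rightarrow> nat set" where
  "block c t u = {s\<in>{1..t}. lastchg c s = u}"

lemma block_last:
  assumes "1 \<le> t"
  shows "block c t u =
    (if lastchg c t = u then insert t (block c (t - 1) u) else block c (t - 1) u)"
proof -
  have "{1..t} = insert t {1..t - 1}" using assms by auto
  then show ?thesis unfolding block_def by auto
qed

lemma block_lastchg:
  assumes "c 1" "1 \<le> t"
  shows "block c t (lastchg c t) = {lastchg c t..t}"
proof (intro set_eqI iffI)
  fix s assume "s \<in> block c t (lastchg c t)"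
  then show "s \<in> {lastchg c t..t}"
    unfolding block_def using assms lastchg_le[of c s] by auto
next
  fix s assume s: "s \<in> {lastchg c t..t}"
  have "1 \<le> lastchg c t" "c (lastchg c t)"
    using assms lastchg_ge_1 change_at_lastchg by auto
  moreover have "\<forall>w. lastchg c t < w \<and> w \<le> s \<longrightarrow> \<not> c w"
    using s assms no_change_after_lastchg[of c t] by auto
  ultimately have "lastchg c s = lastchg c t"
    using s assms by (subst lastchg_eq_iff) auto
  then show "s \<in> block c t (lastchg c t)"
    unfolding block_def using s \<open>1 \<le> lastchg c t\<close> by auto
qed

lemma block_eq_interval:
  assumes "c 1" "c u" "1 \<le> u" "u \<le> t"
  obtains v where "u \<le> v" "v \<le> t" "block c t u = {u..v}"
proof -
  have fin: "finite (block c t u)" unfolding block_def by simp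
  have "lastchg c u = u" using assms by (subst lastchg_eq_iff) auto
  then have u_in: "u \<in> block c t u" using assms unfolding block_def by auto
  define v where "v = Max (block c t u)"
  have "v \<in> block c t u" unfolding v_def using fin u_in by (intro Max_in) auto
  then have v: "lastchg c v = u" "1 \<le> v" "v \<le> t" unfolding block_def by auto
  have "u \<le> v" unfolding v_def using fin u_in by simp
  have "block c t u = block c v u"
    unfolding block_def using v fin by (auto simp: v_def block_def)
  also have "\<dots> = {u..v}" using block_lastchg[of c v] v assms by simp
  finally show ?thesis using that \<open>u \<le> v\<close> \<open>v \<le> t\<close> by blast
qed

locale likelihood_model =
  fixes Q :: "'th measure" and lik :: "'y \<Rightarrow> 'th \<Rightarrow> real" and y :: "nat \<Rightarrow> 'y" and T :: nat
  assumes prior: "prob_space Q"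
    and lik_nonneg: "\<And>v \<theta>. 0 \<le> lik v \<theta>"
    and integrable_lik_block: "\<And>a b. 1 \<le> a \<Longrightarrow> a \<le> b \<Longrightarrow> b \<le> T \<Longrightarrow>
      integrable Q (\<lambda>\<theta>. \<Prod>s\<in>{a..b}. lik (y s) \<theta>)"
begin

lemma ydens_eq_prod_blocks:
  assumes "c 1" "t \<le> T"
  shows "ydens Q lik y t c = (\<Prod>u\<in>{u\<in>{1..t}. c u}. \<integral>\<theta>. (\<Prod>s\<in>block c t u. lik (y s) \<theta>) \<partial>Q)"
proof -
  interpret product_sigma_finite "\<lambda>_. Q"
    unfolding product_sigma_finite_def using prior prob_space_imp_sigma_finite by blast
  let ?J = "{u\<in>{1..t}. c u}"
  have "lastchg c ` {1..t} \<subseteq> ?J" using assms lastchg_le lastchg_ge_1 change_at_lastchg by fastforce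
  then have "(\<Prod>s\<in>{1..t}. lik (y s) (\<theta> (lastchg c s))) =
      (\<Prod>u\<in>?J. \<Prod>s\<in>block c t u. lik (y s) (\<theta> u))" for \<theta> :: "nat \<Rightarrow> 'th"
    unfolding block_def by (subst prod.group[symmetric]) (auto intro!: prod.cong)
  then have "ydens Q lik y t c =
      (\<integral>\<theta>. (\<Prod>u\<in>?J. (\<lambda>x. \<Prod>s\<in>block c t u. lik (y s) x) (\<theta> u)) \<partial>(PiM ?J (\<lambda>_. Q)))"
    unfolding ydens_def by simp
  also have "\<dots> = (\<Prod>u\<in>?J. \<integral>\<theta>. (\<Prod>s\<in>block c t u. lik (y s) \<theta>) \<partial>Q)"
  proof (rule product_integral_prod)
    fix u assume u: "u \<in> ?J"
    then obtain v where "u \<le> v" "v \<le> t" "block c t u = {u..v}"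
      using assms block_eq_interval[of c u t] by auto
    then show "integrable Q (\<lambda>x. \<Prod>s\<in>block c t u. lik (y s) x)"
      using integrable_lik_block u assms by auto
  qed auto
  finally show ?thesis .
qed

lemma ydens_change_last:
  assumes "c 1" "c t" "1 \<le> t" "t \<le> T"
  shows "ydens Q lik y t c = ydens Q lik y (t - 1) c * margL Q lik y t t"
proof -
  let ?J = "\<lambda>t. {u\<in>{1..t}. c u}"
  let ?I = "\<lambda>t u. \<integral>\<theta>. (\<Prod>s\<in>block c t u. lik (y s) \<theta>) \<partial>Q"
  have last: "lastchg c t = t" using assms by (subst lastchg_eq_iff) auto
  have J: "?J t = insert t (?J (t - 1))" "t \<notin> ?J (t - 1)" using assms by auto
  have "block c t t = {t}" using block_lastchg[of c t] last assms by simp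
  then have "?I t t = margL Q lik y t t" unfolding margL_def by simp
  moreover have "block c t u = block c (t - 1) u" if "u \<in> ?J (t - 1)" for u
    using block_last[of t c u] last that assms by auto
  then have "(\<Prod>u\<in>?J (t - 1). ?I t u) = (\<Prod>u\<in>?J (t - 1). ?I (t - 1) u)"
    by (intro prod.cong) auto
  ultimately have "(\<Prod>u\<in>?J t. ?I t u) = margL Q lik y t t * (\<Prod>u\<in>?J (t - 1). ?I (t - 1) u)"
    unfolding J(1) using J(2) by (simp add: prod.insert)
  then show ?thesis
    using assms ydens_eq_prod_blocks[of c t] ydens_eq_prod_blocks[of c "t - 1"] by simp
qed

text \<open>When L(y^{k:(t-1)}) vanishes, the predictive is 0 by division by zero;
  the identity survives because then the nonnegative integrand vanishes almost everywhere.\<close>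
lemma margL_eq_mult_predP:
  assumes "1 \<le> k" "k < t" "t \<le> T"
  shows "margL Q lik y k t = margL Q lik y k (t - 1) * predP Q lik y k t"
proof (cases "margL Q lik y k (t - 1) = 0")
  case True
  have split: "{k..t} = insert t {k..t - 1}" "t \<notin> {k..t - 1}" using assms by auto
  have "integrable Q (\<lambda>\<theta>. \<Prod>s\<in>{k..t - 1}. lik (y s) \<theta>)"
    using assms by (intro integrable_lik_block) auto
  then have "AE \<theta> in Q. (\<Prod>s\<in>{k..t - 1}. lik (y s) \<theta>) = 0"
    using True lik_nonneg unfolding margL_def
    by (subst (asm) integral_nonneg_eq_0_iff_AE) (auto intro: prod_nonneg)
  then have "AE \<theta> in Q. (\<Prod>s\<in>{k..t}. lik (y s) \<theta>) = 0"
    unfolding split using split(2) by auto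
  then have "margL Q lik y k t = 0"
    unfolding margL_def by (rule integral_eq_zero_AE)
  then show ?thesis using True by simp
qed (simp add: predP_def)

lemma ydens_no_change_last:
  assumes "c 1" "\<not> c t" "2 \<le> t" "t \<le> T"
  shows "ydens Q lik y t c = ydens Q lik y (t - 1) c * predP Q lik y (lastchg c (t - 1)) t"
proof -
  let ?J = "{u\<in>{1..t - 1}. c u}"
  let ?I = "\<lambda>t u. \<integral>\<theta>. (\<Prod>s\<in>block c t u. lik (y s) \<theta>) \<partial>Q"
  define k where "k = lastchg c (t - 1)"
  have k: "1 \<le> k" "k \<le> t - 1" "k \<in> ?J"
    using assms lastchg_ge_1[of c "t - 1"] lastchg_le[of c "t - 1"] change_at_lastchg[of c "t - 1"]
    unfolding k_def by auto
  have last: "lastchg c t = k" using assms lastchg_no_change unfolding k_def by simp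
  have "u \<le> t \<and> c u \<longleftrightarrow> u \<le> t - 1 \<and> c u" for u using assms by (cases "u = t") auto
  then have J: "{u\<in>{1..t}. c u} = ?J" by auto
  define R where "R = (\<Prod>u\<in>?J - {k}. ?I (t - 1) u)"
  have "block c t u = block c (t - 1) u" if "u \<noteq> k" for u
    using block_last[of t c u] last that assms by auto
  then have "(\<Prod>u\<in>?J - {k}. ?I t u) = R"
    unfolding R_def by (intro prod.cong) auto
  then have "(\<Prod>u\<in>?J. ?I t u) = ?I t k * R"
    using k by (simp add: prod.remove)
  also have "?I t k = margL Q lik y k t"
    unfolding margL_def using block_lastchg[of c t] last assms by simp
  finally have now: "ydens Q lik y t c = margL Q lik y k t * R"
    using assms ydens_eq_prod_blocks[of c t] J by simp
  have "(\<Prod>u\<in>?J. ?I (t - 1) u) = ?I (t - 1) k * R"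
    unfolding R_def using k by (simp add: prod.remove)
  also have "?I (t - 1) k = margL Q lik y k (t - 1)"
    unfolding margL_def using block_lastchg[of c "t - 1"] assms by (simp add: k_def)
  finally have before: "ydens Q lik y (t - 1) c = margL Q lik y k (t - 1) * R"
    using assms ydens_eq_prod_blocks[of c "t - 1"] by simp
  show ?thesis
    using now before margL_eq_mult_predP[of k t] k assms by (simp add: k_def)
qed

lemma joint_no_change_last:
  assumes t: "2 \<le> t" "t \<le> T"
    and no_change: "\<And>C. C \<subseteq> {2..t - 1} \<Longrightarrow> \<not> E (cfg (insert t C))"
    and E: "\<And>C. C \<subseteq> {2..t - 1} \<Longrightarrow> E (cfg C) \<longleftrightarrow> E' (cfg C)"
    and E': "\<And>C. C \<subseteq> {2..t - 1} \<Longrightarrow> E' (cfg C) \<Longrightarrow>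
      lastchg (cfg C) (t - 1) = k \<and> \<not> opn dt (cfg C) t"
  shows "joint Q lik y dt p0 q0 t E =
    joint Q lik y dt p0 q0 (t - 1) E' * predP Q lik y k t * (1 - p0)"
proof -
  let ?A = "{C. C \<subseteq> {2..t - 1} \<and> E' (cfg C)}"
  have step: "cprob dt p0 q0 t (cfg C) * ydens Q lik y t (cfg C) =
      cprob dt p0 q0 (t - 1) (cfg C) * ydens Q lik y (t - 1) (cfg C) * (predP Q lik y k t * (1 - p0))"
    if "C \<in> ?A" for C
  proof -
    have "\<not> cfg C t" "cfg C 1" using that t by (auto simp: cfg_def)
    then show ?thesis
      using cprob_last[OF t(1), of dt p0 q0 "cfg C"] ydens_no_change_last[of "cfg C" t] E'[of C] that t
      by simp
  qed
  have A: "{C. C \<subseteq> {2..t - 1} \<and> E (cfg C)} = ?A" using E by auto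
  have B: "{C. C \<subseteq> {2..t - 1} \<and> E (cfg (insert t C))} = {}" using no_change by auto
  have "joint Q lik y dt p0 q0 t E =
      (\<Sum>C\<in>?A. cprob dt p0 q0 t (cfg C) * ydens Q lik y t (cfg C))"
    unfolding joint_split_last[OF t(1)] A B by simp
  also have "\<dots> = joint Q lik y dt p0 q0 (t - 1) E' * (predP Q lik y k t * (1 - p0))"
    unfolding joint_def using step by (simp add: sum_distrib_right)
  finally show ?thesis by simp
qed

lemma joint_change_last:
  assumes t: "2 \<le> t" "t \<le> T"
    and change: "\<And>C. C \<subseteq> {2..t - 1} \<Longrightarrow> \<not> E (cfg C)"
    and E: "\<And>C. C \<subseteq> {2..t - 1} \<Longrightarrow> E (cfg (insert t C)) \<longleftrightarrow> E' (cfg C)"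
    and E': "\<And>C. C \<subseteq> {2..t - 1} \<Longrightarrow> E' (cfg C) \<Longrightarrow> opn dt (cfg (insert t C)) t = opened"
  shows "joint Q lik y dt p0 q0 t E =
    joint Q lik y dt p0 q0 (t - 1) E' * margL Q lik y t t * (if opened then q0 else p0)"
proof -
  let ?A = "{C. C \<subseteq> {2..t - 1} \<and> E' (cfg C)}"
  have step: "cprob dt p0 q0 t (cfg (insert t C)) * ydens Q lik y t (cfg (insert t C)) =
      cprob dt p0 q0 (t - 1) (cfg C) * ydens Q lik y (t - 1) (cfg C) *
        (margL Q lik y t t * (if opened then q0 else p0))"
    if "C \<in> ?A" for C
  proof -
    have agree: "\<And>u. u \<le> t - 1 \<Longrightarrow> cfg (insert t C) u = cfg C u" using t by (auto simp: cfg_def)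
    have changes: "cfg (insert t C) 1" "cfg (insert t C) t" by (simp_all add: cfg_def)
    have "cprob dt p0 q0 t (cfg (insert t C)) =
        cprob dt p0 q0 (t - 1) (cfg (insert t C)) * (if opened then q0 else p0)"
      using cprob_last[OF t(1), of dt p0 q0 "cfg (insert t C)"] changes E'[of C] that by simp
    also have "cprob dt p0 q0 (t - 1) (cfg (insert t C)) = cprob dt p0 q0 (t - 1) (cfg C)"
      using agree by (rule cprob_cong)
    moreover have "ydens Q lik y t (cfg (insert t C)) =
        ydens Q lik y (t - 1) (cfg (insert t C)) * margL Q lik y t t"
      using changes t by (intro ydens_change_last) auto
    moreover have "ydens Q lik y (t - 1) (cfg (insert t C)) = ydens Q lik y (t - 1) (cfg C)"
      using agree by (rule ydens_cong)
    ultimately show ?thesis by simp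
  qed
  have A: "{C. C \<subseteq> {2..t - 1} \<and> E (cfg C)} = {}" using change by auto
  have B: "{C. C \<subseteq> {2..t - 1} \<and> E (cfg (insert t C))} = ?A" using E by auto
  have "joint Q lik y dt p0 q0 t E =
      (\<Sum>C\<in>?A. cprob dt p0 q0 t (cfg (insert t C)) * ydens Q lik y t (cfg (insert t C)))"
    unfolding joint_split_last[OF t(1)] A B by simp
  also have "\<dots> = joint Q lik y dt p0 q0 (t - 1) E' * (margL Q lik y t t * (if opened then q0 else p0))"
    unfolding joint_def using step by (simp add: sum_distrib_right)
  finally show ?thesis by simp
qed

lemma joint_1:
  assumes "1 \<le> T"
  shows "joint Q lik y dt p0 q0 1 (\<lambda>_. True) = margL Q lik y 1 1"
proof -
  have "{C. C \<subseteq> {2..1::nat} \<and> True} = {{}}" by auto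
  moreover have "cprob dt p0 q0 1 (cfg {}) = 1" by (simp add: cprob_def)
  moreover have "ydens Q lik y 0 (cfg {}) = 1"
    using ydens_eq_prod_blocks[of "cfg {}" 0] by (simp add: cfg_def)
  moreover have "ydens Q lik y 1 (cfg {}) = ydens Q lik y 0 (cfg {}) * margL Q lik y 1 1"
    using ydens_change_last[of "cfg {}" 1] assms by (simp add: cfg_def)
  ultimately show ?thesis unfolding joint_def by simp
qed

lemma Hc_2_0:
  assumes "2 \<le> T"
  shows "Hc Q lik y dt p0 q0 2 0 = margL Q lik y 1 1 * margL Q lik y 2 2 * p0"
proof -
  have not_open: "\<not> opn dt c 2" for c by (simp add: opn_def is_open_def)
  have "joint Q lik y dt p0 q0 2 (\<lambda>c. runlen c 2 = 0 \<and> \<not> anom dt c 2) =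
      joint Q lik y dt p0 q0 (2 - 1) (\<lambda>_. True) * margL Q lik y 2 2 * (if False then q0 else p0)"
  proof (rule joint_change_last)
    fix C :: "nat set" assume "C \<subseteq> {2..2 - 1}"
    then have "C = {}" by auto
    then show "\<not> (runlen (cfg C) 2 = 0 \<and> \<not> anom dt (cfg C) 2)"
      using runlen_eq_0_iff[of "cfg C" 2] by (simp add: cfg_def)
    show "(runlen (cfg (insert 2 C)) 2 = 0 \<and> \<not> anom dt (cfg (insert 2 C)) 2) \<longleftrightarrow> True"
      using runlen_eq_0_iff[of "cfg (insert 2 C)" 2] anom_iff not_open by (simp add: cfg_def)
    show "opn dt (cfg (insert 2 C)) 2 = False" using not_open by simp
  qed (use assms in auto)
  then show ?thesis unfolding Hc_def using joint_1 assms by simp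
qed

lemma Ga_no_change_last:
  assumes "2 \<le> t" "t \<le> T" "0 < r"
  shows "Ga Q lik y dt p0 q0 t r' r =
    Ga Q lik y dt p0 q0 (t - 1) r' (r - 1) * predP Q lik y (t - r) t * (1 - p0)"
proof -
  define L where "L = t - r"
  have shift: "t - 1 - (r - 1) = L" unfolding L_def using assms by arith
  let ?gap = "\<lambda>c. anom dt c L \<and> c (L - 1 - r') \<and> (\<forall>s. L - 1 - r' < s \<and> s < L \<longrightarrow> \<not> c s)"
  have "joint Q lik y dt p0 q0 t (\<lambda>c. runlen c t = r \<and> ?gap c) =
      joint Q lik y dt p0 q0 (t - 1) (\<lambda>c. runlen c (t - 1) = r - 1 \<and> ?gap c) *
        predP Q lik y L t * (1 - p0)"
  proof (rule joint_no_change_last)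
    fix C assume "C \<subseteq> {2..t - 1}"
    then have changes: "cfg C 1" "\<not> cfg C t" "cfg (insert t C) 1" "cfg (insert t C) t"
      using assms by (auto simp: cfg_def)
    show "\<not> (runlen (cfg (insert t C)) t = r \<and> ?gap (cfg (insert t C)))"
      using runlen_eq_0_iff[of "cfg (insert t C)" t] changes assms by auto
    show "(runlen (cfg C) t = r \<and> ?gap (cfg C)) \<longleftrightarrow> (runlen (cfg C) (t - 1) = r - 1 \<and> ?gap (cfg C))"
      using runlen_no_change[of "cfg C" t] changes assms by auto
    assume run: "runlen (cfg C) (t - 1) = r - 1 \<and> ?gap (cfg C)"
    have "lastchg (cfg C) (t - 1) \<le> t - 1"
      using changes assms by (intro lastchg_le) auto
    then have "lastchg (cfg C) (t - 1) = L"
      using run shift unfolding runlen_def by auto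
    then show "lastchg (cfg C) (t - 1) = L \<and> \<not> opn dt (cfg C) t"
      using opn_iff_lastchg[of "cfg C" t dt] changes run assms by auto
  qed (use assms in auto)
  then show ?thesis unfolding Ga_def shift L_def by simp
qed

lemma Ga_change_last:
  assumes "3 \<le> t" "t \<le> T" "1 \<le> dt" "r' \<le> dt - 1" "r' \<le> t - 3"
  shows "Ga Q lik y dt p0 q0 t r' 0 = Hc Q lik y dt p0 q0 (t - 1) r' * margL Q lik y t t * q0"
proof -
  define L where "L = t - 1 - r'"
  have L: "L < t" "r' < t - 1" using assms unfolding L_def by auto
  have "joint Q lik y dt p0 q0 t
        (\<lambda>c. runlen c t = 0 \<and> anom dt c t \<and> c L \<and> (\<forall>s. L < s \<and> s < t \<longrightarrow> \<not> c s)) =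
      joint Q lik y dt p0 q0 (t - 1) (\<lambda>c. runlen c (t - 1) = r' \<and> \<not> anom dt c L) *
        margL Q lik y t t * (if True then q0 else p0)"
  proof (rule joint_change_last)
    fix C assume "C \<subseteq> {2..t - 1}"
    then have changes: "cfg C 1" "\<not> cfg C t" "cfg (insert t C) 1" "cfg (insert t C) t"
      and agree: "\<And>u. u \<le> t - 1 \<Longrightarrow> cfg (insert t C) u = cfg C u"
      using assms by (auto simp: cfg_def)
    show "\<not> (runlen (cfg C) t = 0 \<and> anom dt (cfg C) t \<and> cfg C L \<and>
        (\<forall>s. L < s \<and> s < t \<longrightarrow> \<not> cfg C s))"
      using runlen_eq_0_iff[of "cfg C" t] changes assms by auto
    have run: "runlen (cfg C) (t - 1) = r' \<longleftrightarrow>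
        cfg (insert t C) L \<and> (\<forall>s. L < s \<and> s < t \<longrightarrow> \<not> cfg (insert t C) s)"
      using runlen_eq_iff[of "cfg C" r' "t - 1"] changes agree L unfolding L_def[symmetric]
      by (auto simp: less_Suc_eq_le)
    have "opn dt (cfg (insert t C)) t = opn dt (cfg C) t"
      using agree by (intro opn_cong) auto
    then have opened: "opn dt (cfg (insert t C)) t \<longleftrightarrow> \<not> anom dt (cfg C) L"
      if "runlen (cfg C) (t - 1) = r'"
      using opn_iff_runlen[of "cfg C" t r' dt] that changes assms unfolding L_def by auto
    show "(runlen (cfg (insert t C)) t = 0 \<and> anom dt (cfg (insert t C)) t \<and> cfg (insert t C) L \<and>
        (\<forall>s. L < s \<and> s < t \<longrightarrow> \<not> cfg (insert t C) s)) \<longleftrightarrow>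
      (runlen (cfg C) (t - 1) = r' \<and> \<not> anom dt (cfg C) L)"
      using runlen_eq_0_iff[of "cfg (insert t C)" t] anom_iff[of dt "cfg (insert t C)" t]
        run opened changes assms by auto
    show "runlen (cfg C) (t - 1) = r' \<and> \<not> anom dt (cfg C) L \<Longrightarrow> opn dt (cfg (insert t C)) t = True"
      using opened by auto
  qed (use assms in auto)
  then show ?thesis unfolding Ga_def Hc_def L_def by (simp add: diff_diff_add)
qed

end

theorem theorem3:
  fixes Q :: "'th measure" and lik :: "'y \<Rightarrow> 'th \<Rightarrow> real" and y :: "nat \<Rightarrow> 'y"
    and T dt :: nat and p0 q0 :: real
  assumes "T \<ge> 3" and "dt \<ge> 1"
    and "0 < p0" "p0 < 1" "0 < q0" "q0 < 1"
    and "prob_space Q"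
    and "\<And>v. lik v \<in> borel_measurable Q"
    and "\<And>v \<theta>. 0 \<le> lik v \<theta>"
    and "\<And>a b. 1 \<le> a \<Longrightarrow> a \<le> b \<Longrightarrow> b \<le> T \<Longrightarrow>
           integrable Q (\<lambda>\<theta>. \<Prod>s\<in>{a..b}. lik (y s) \<theta>)"
  shows "Ga Q lik y dt p0 q0 3 0 0
           = margL Q lik y 1 1 * margL Q lik y 2 2 * margL Q lik y 3 3 * p0 * q0
       \<and> (\<forall>t r r'. 3 < t \<and> t \<le> T \<and> r \<le> t - 3 \<and> r' \<le> min (dt - 1) (t - r - 3) \<longrightarrow>
            Ga Q lik y dt p0 q0 t r' r =
              (if r > 0 then Ga Q lik y dt p0 q0 (t - 1) r' (r - 1) * predP Q lik y (t - r) t * (1 - p0)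
               else Hc Q lik y dt p0 q0 (t - 1) r' * margL Q lik y t t * q0))"
proof -
  interpret likelihood_model Q lik y T
    using assms(7,9,10) by (rule likelihood_model.intro)
  have "Ga Q lik y dt p0 q0 3 0 0 = Hc Q lik y dt p0 q0 2 0 * margL Q lik y 3 3 * q0"
    using Ga_change_last[where t = 3 and r' = 0] assms(1,2) by simp
  then have base: "Ga Q lik y dt p0 q0 3 0 0
      = margL Q lik y 1 1 * margL Q lik y 2 2 * margL Q lik y 3 3 * p0 * q0"
    using Hc_2_0 assms(1) by (simp add: mult_ac)
  have step: "Ga Q lik y dt p0 q0 t r' r =
      (if r > 0 then Ga Q lik y dt p0 q0 (t - 1) r' (r - 1) * predP Q lik y (t - r) t * (1 - p0)
       else Hc Q lik y dt p0 q0 (t - 1) r' * margL Q lik y t t * q0)"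
    if "3 < t" "t \<le> T" "r \<le> t - 3" "r' \<le> min (dt - 1) (t - r - 3)" for t r r'
  proof (cases "r > 0")
    case True
    then show ?thesis using Ga_no_change_last[where t = t and r = r and r' = r'] that by simp
  next
    case False
    then show ?thesis using Ga_change_last[where t = t and r' = r'] that assms(2) by simp
  qed
  show ?thesis using base step by (intro conjI allI impI) auto
qed

end
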